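(* In the setting described in the context, let $\mathbf{r}_t,\mathbf{s}_t,\mathbf{L}_t$ be produced by the O-LSD iteration. Then: (1) the values $\hat\ell(\mathbf{d},\mathbf{L},\mathbf{r},\mathbf{s})$ and $\ell(\mathbf{d},\mathbf{L})$ (for data $\mathbf{d}$, iterates $\mathbf{L}=\mathbf{L}_t$ and the corresponding minimizers $\mathbf{r},\mathbf{s}$) are uniformly bounded; (2) the surrogate functions $g_t(\mathbf{L})$ are uniformly bounded and Lipschitz in $\mathbf{L}$.
   Context: Fix integers $p,r\ge 1$ and constants $\lambda_1,\lambda_2>0$. Let $\mathcal{G}$ be a finite collection of subsets of $\{1,\dots,p\}$. For $\mathbf{s}\in\mathbb{R}^p$ and $g\in\mathcal{G}$, let $\mathbf{s}_{|g}$ be the vector equal to $\mathbf{s}$ on indices in $g$ and zero elsewhere, and $\|\mathbf{s}\|_{\ell_1/\ell_\infty}=\sum_{g\in\mathcal{G}}\|\mathbf{s}_{|g}\|_\infty$. Define $\hat\ell(\mathbf{d},\mathbf{L},\mathbf{r},\mathbf{s})=\tfrac12\|\mathbf{d}-\mathbf{L}\mathbf{r}-\mathbf{s}\|_2^2+\tfrac{\lambda_1}{2}\|\mathbf{r}\|_2^2+\lambda_2\|\mathbf{s}\|_{\ell_1/\ell_\infty}$ and $\ell(\mathbf{d},\mathbf{L})=\min_{\mathbf{r},\mathbf{s}}\hat\ell(\mathbf{d},\mathbf{L},\mathbf{r},\mathbf{s})$. Data: $\mathbf{d}_1,\mathbf{d}_2,\dots\in\mathbb{R}^p$ independent and uniformly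 bounded (there is $M$ with $\|\mathbf{d}_t\|_2\le M$ for all $t$). O-LSD iteration: arbitrary $\mathbf{L}_0\in\mathbb{R}^{p\times r}$, $\mathbf{A}_0=\mathbf{0}$, $\mathbf{B}_0=\mathbf{0}$. For $t\ge1$: $(\mathbf{r}_t,\mathbf{s}_t)$ is a minimizer of $\hat\ell(\mathbf{d}_t,\mathbf{L}_{t-1},\cdot,\cdot)$; $\mathbf{A}_t=\mathbf{A}_{t-1}+\mathbf{r}_t\mathbf{r}_t^T$, $\mathbf{B}_t=\mathbf{B}_{t-1}+(\mathbf{d}_t-\mathbf{s}_t)\mathbf{r}_t^T$; $\mathbf{L}_t$ is the minimizer of the surrogate $g_t(\mathbf{L})=\frac1t\sum_{i=1}^t\hat\ell(\mathbf{d}_i,\mathbf{L},\mathbf{r}_i,\mathbf{s}_i)+\frac{\lambda_1}{2t}\|\mathbf{L}\|_F^2$, i.e. $\mathbf{L}_t=\mathbf{B}_t(\mathbf{A}_t+\lambda_1\mathbf{I})^{-1}$. The iterates $\mathbf{L}_t$ lie in a compact set $\mathcal{L}\subset\mathbb{R}^{p\times r}$, and "uniformly bounded/Lipschitz" means with constants independent of $t$, for $\mathbf{L}\in\mathcal{L}$. *)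

theory Defs
  imports "HOL-Analysis.Analysis"
begin

definition restr :: "real ^ 'p \<Rightarrow> 'p set \<Rightarrow> real ^ 'p" where
  "restr s g = (\<chi> i. if i \<in> g then s $ i else 0)"

text \<open>Sup-norm of a vector (index type finite, hence nonempty).\<close>
definition linf_norm :: "real ^ 'p \<Rightarrow> real" where
  "linf_norm s = Max (range (\<lambda>i. \<bar>s $ i\<bar>))"

definition l1linf :: "'p set set \<Rightarrow> real ^ 'p \<Rightarrow> real" where
  "l1linf G s = (\<Sum>g\<in>G. linf_norm (restr s g))"

definition lhat :: "real \<Rightarrow> real \<Rightarrow> 'p set set \<Rightarrow> real ^ 'p \<Rightarrow> real ^ 'r ^ 'p
                     \<Rightarrow> real ^ 'r \<Rightarrow> real ^ 'p \<Rightarrow> real" where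
  "lhat lam1 lam2 G d L r s =
     (1/2) * (norm (d - L *v r - s))\<^sup>2 + (lam1/2) * (norm r)\<^sup>2 + lam2 * l1linf G s"

text \<open>ell(d,L) = min over (r,s) of lhat; written as the infimum (attained).\<close>
definition ell :: "real \<Rightarrow> real \<Rightarrow> 'p set set \<Rightarrow> real ^ 'p \<Rightarrow> real ^ 'r ^ 'p \<Rightarrow> real" where
  "ell lam1 lam2 G d L = (INF rs\<in>UNIV. lhat lam1 lam2 G d L (fst rs) (snd rs))"

definition is_minimizer :: "real \<Rightarrow> real \<Rightarrow> 'p set set \<Rightarrow> real ^ 'p \<Rightarrow> real ^ 'r ^ 'p
                              \<Rightarrow> real ^ 'r \<Rightarrow> real ^ 'p \<Rightarrow> bool" where
  "is_minimizer lam1 lam2 G d L r s \<longleftrightarrow>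
     (\<forall>r' s'. lhat lam1 lam2 G d L r s \<le> lhat lam1 lam2 G d L r' s')"

definition outer :: "real ^ 'm \<Rightarrow> real ^ 'n \<Rightarrow> real ^ 'n ^ 'm" where
  "outer u v = (\<chi> a b. u $ a * v $ b)"

definition Amat :: "(nat \<Rightarrow> real ^ 'r) \<Rightarrow> nat \<Rightarrow> real ^ 'r ^ 'r" where
  "Amat r t = (\<Sum>i\<in>{1..t}. outer (r i) (r i))"

definition Bmat :: "(nat \<Rightarrow> real ^ 'p) \<Rightarrow> (nat \<Rightarrow> real ^ 'r) \<Rightarrow> (nat \<Rightarrow> real ^ 'p) \<Rightarrow> nat
                     \<Rightarrow> real ^ 'r ^ 'p" where
  "Bmat d r s t = (\<Sum>i\<in>{1..t}. outer (d i - s i) (r i))"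

text \<open>Surrogate g_t(L); the Frobenius norm of L is the Euclidean norm on real^'r^'p.\<close>
definition surrogate :: "real \<Rightarrow> real \<Rightarrow> 'p set set \<Rightarrow> (nat \<Rightarrow> real ^ 'p) \<Rightarrow> (nat \<Rightarrow> real ^ 'r)
                          \<Rightarrow> (nat \<Rightarrow> real ^ 'p) \<Rightarrow> nat \<Rightarrow> real ^ 'r ^ 'p \<Rightarrow> real" where
  "surrogate lam1 lam2 G d r s t L =
     (1 / real t) * (\<Sum>i\<in>{1..t}. lhat lam1 lam2 G (d i) L (r i) (s i))
     + lam1 / (2 * real t) * (norm L)\<^sup>2"

end

theory Submission
  imports Defs
begin

text \<open>Comparing a minimizer \<open>(r, s)\<close> with \<open>(0, 0)\<close> bounds its objective value by
  \<open>\<parallel>d\<parallel>\<^sup>2 / 2\<close>. This bounds the optimal values, and it also forces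
  \<open>\<parallel>r\<parallel> \<le> \<parallel>d\<parallel> / sqrt lam1\<close> and \<open>\<parallel>d - L r - s\<parallel> \<le> \<parallel>d\<parallel>\<close>, hence a bound on \<open>\<parallel>s\<parallel>\<close>.
  For fixed \<open>d, r, s\<close> the objectives at \<open>X\<close> and \<open>Y\<close> differ by half a difference of squared
  residual norms, the residuals differing by \<open>(Y - X) r\<close>; so with \<open>d, r, s\<close> bounded the objective
  is Lipschitz in \<open>L\<close> on the bounded set \<open>LL\<close>, uniformly in the data index. Averaging preserves
  bounds and Lipschitz constants, and the regularizer \<open>lam1 / (2 t) \<parallel>L\<parallel>\<^sup>2\<close> is harmless on \<open>LL\<close>.\<close>

lemma norm_matrix_vector_mult_le:
  fixes A :: "real^'n::finite^'m::finite"
  shows "norm (A *v x) \<le> norm A * norm x"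
proof -
  have "norm (A *v x) = L2_set (\<lambda>i. \<bar>inner (A $ i) x\<bar>) UNIV"
    by (simp add: norm_vec_def matrix_mult_dot)
  also have "\<dots> \<le> L2_set (\<lambda>i. norm (A $ i) * norm x) UNIV"
    by (rule L2_set_mono) (auto simp: Cauchy_Schwarz_ineq2)
  also have "\<dots> = norm A * norm x"
    by (simp add: norm_vec_def L2_set_left_distrib)
  finally show ?thesis .
qed

lemma abs_power2_norm_diff_le:
  fixes u v :: "'a::real_normed_vector"
  shows "\<bar>(norm u)\<^sup>2 - (norm v)\<^sup>2\<bar> \<le> norm (u - v) * (norm u + norm v)"
proof -
  have "(norm u)\<^sup>2 - (norm v)\<^sup>2 = (norm u - norm v) * (norm u + norm v)"
    by (simp add: power2_eq_square algebra_simps)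
  then have "\<bar>(norm u)\<^sup>2 - (norm v)\<^sup>2\<bar> = \<bar>norm u - norm v\<bar> * (norm u + norm v)"
    by (simp add: abs_mult)
  also have "\<dots> \<le> norm (u - v) * (norm u + norm v)"
    by (rule mult_right_mono) (auto simp: norm_triangle_ineq3)
  finally show ?thesis .
qed

lemma abs_mean_le:
  assumes "t \<ge> 1" and "\<And>i. i \<in> {1..t} \<Longrightarrow> \<bar>f i\<bar> \<le> C"
  shows "\<bar>(1 / real t) * (\<Sum>i\<in>{1..t}. f i)\<bar> \<le> (C::real)"
proof -
  have "\<bar>\<Sum>i\<in>{1..t}. f i\<bar> \<le> (\<Sum>i\<in>{1..t}. C)"
    by (rule order_trans[OF sum_abs sum_mono]) (rule assms(2))
  then have "\<bar>\<Sum>i\<in>{1..t}. f i\<bar> \<le> real t * C"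
    by simp
  then show ?thesis
    using assms(1) by (simp add: abs_mult field_simps)
qed

lemma linf_norm_nonneg: "0 \<le> linf_norm s"
  unfolding linf_norm_def by (meson Max_ge abs_ge_zero finite_imageI finite rangeI order_trans)

lemma l1linf_nonneg: "0 \<le> l1linf G s"
  unfolding l1linf_def by (simp add: sum_nonneg linf_norm_nonneg)

lemma l1linf_zero [simp]: "l1linf G (0::real^'p::finite) = 0"
proof -
  have "restr 0 g = (0::real^'p)" for g
    unfolding restr_def by (simp add: vec_eq_iff)
  moreover have "linf_norm (0::real^'p) = 0"
    unfolding linf_norm_def by simp
  ultimately show ?thesis
    unfolding l1linf_def by simp
qed

lemma lhat_nonneg:
  assumes "0 \<le> lam1" and "0 \<le> lam2"
  shows "0 \<le> lhat lam1 lam2 G d L r s"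
  unfolding lhat_def using assms l1linf_nonneg[of G s] by simp

lemma lhat_zero_zero: "lhat lam1 lam2 G d L 0 0 = (norm d)\<^sup>2 / 2"
  unfolding lhat_def by simp

lemma ell_nonneg:
  assumes "0 \<le> lam1" and "0 \<le> lam2"
  shows "0 \<le> ell lam1 lam2 G d L"
  unfolding ell_def by (rule cINF_greatest) (auto intro: lhat_nonneg[OF assms])

lemma ell_le_half_norm_sq:
  assumes "0 \<le> lam1" and "0 \<le> lam2"
  shows "ell lam1 lam2 G d L \<le> (norm d)\<^sup>2 / 2"
proof -
  have "bdd_below (range (\<lambda>rs. lhat lam1 lam2 G d L (fst rs) (snd rs)))"
    by (rule bdd_belowI[of _ 0]) (auto intro: lhat_nonneg[OF assms])
  then have "ell lam1 lam2 G d L \<le> lhat lam1 lam2 G d L 0 0"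
    unfolding ell_def by (metis (no_types, lifting) cINF_lower UNIV_I fst_conv snd_conv)
  then show ?thesis by (simp add: lhat_zero_zero)
qed

lemma is_minimizer_lhat_le:
  "is_minimizer lam1 lam2 G d L r s \<Longrightarrow> lhat lam1 lam2 G d L r s \<le> (norm d)\<^sup>2 / 2"
  unfolding is_minimizer_def by (metis lhat_zero_zero)

lemma is_minimizer_norm_le:
  assumes lam1: "0 < lam1" and lam2: "0 \<le> lam2"
    and min: "is_minimizer lam1 lam2 G d L r s"
    and d: "norm d \<le> M" and L: "norm L \<le> B"
  shows "norm r \<le> M / sqrt lam1"
    and "norm s \<le> 2 * M + B * (M / sqrt lam1)"
proof -
  have "0 \<le> lam2 * l1linf G s"
    using lam2 l1linf_nonneg[of G s] by simp
  then have "lam1 / 2 * (norm r)\<^sup>2 \<le> lhat lam1 lam2 G d L r s"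
    and "(norm (d - L *v r - s))\<^sup>2 / 2 \<le> lhat lam1 lam2 G d L r s"
    using lam1 unfolding lhat_def by simp_all
  with is_minimizer_lhat_le[OF min]
  have "lam1 * (norm r)\<^sup>2 \<le> (norm d)\<^sup>2"
    and res_sq: "(norm (d - L *v r - s))\<^sup>2 \<le> (norm d)\<^sup>2"
    by linarith+
  from this(1) have r_sq: "(norm r)\<^sup>2 \<le> (norm d)\<^sup>2 / lam1"
    using lam1 by (simp add: pos_le_divide_eq mult.commute)
  show r: "norm r \<le> M / sqrt lam1"
    using real_le_rsqrt[OF r_sq] divide_right_mono[OF d, of "sqrt lam1"] lam1
    by (simp add: real_sqrt_divide)
  have res: "norm (d - L *v r - s) \<le> norm d"
    using power2_le_imp_le[OF res_sq norm_ge_zero] .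
  have "norm (L *v r) \<le> B * (M / sqrt lam1)"
    using norm_matrix_vector_mult_le[of L r] mult_mono[OF L r] order_trans[OF norm_ge_zero L] by simp
  have "norm s = norm ((d - L *v r) - (d - L *v r - s))"
    by simp
  also have "\<dots> \<le> norm (d - L *v r) + norm (d - L *v r - s)"
    by (rule norm_triangle_ineq4)
  also have "\<dots> \<le> norm d + norm (L *v r) + norm (d - L *v r - s)"
    using norm_triangle_ineq4[of d "L *v r"] by simp
  finally show "norm s \<le> 2 * M + B * (M / sqrt lam1)"
    using res d \<open>norm (L *v r) \<le> B * (M / sqrt lam1)\<close> by linarith
qed

lemma lhat_lipschitz_in_L:
  fixes d s :: "real^'p::finite" and r :: "real^'r::finite" and X Y :: "real^'r^'p"
  assumes d: "norm d \<le> M" and r: "norm r \<le> R" and s: "norm s \<le> S"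
    and X: "norm X \<le> B" and Y: "norm Y \<le> B"
  shows "\<bar>lhat lam1 lam2 G d X r s - lhat lam1 lam2 G d Y r s\<bar> \<le> R * (M + B * R + S) * norm (X - Y)"
proof -
  define u where "u = d - X *v r - s"
  define v where "v = d - Y *v r - s"
  have res_le: "norm (d - Z *v r - s) \<le> M + B * R + S" if Z: "norm Z \<le> B" for Z :: "real^'r^'p"
  proof -
    have "norm (Z *v r) \<le> B * R"
      using norm_matrix_vector_mult_le[of Z r] mult_mono[OF Z r] order_trans[OF norm_ge_zero Z] by simp
    then show ?thesis
      using norm_triangle_ineq4[of d "Z *v r"] norm_triangle_ineq4[of "d - Z *v r" s] d s by linarith
  qed
  have "u - v = (Y - X) *v r"
    unfolding u_def v_def by (simp add: matrix_vector_mult_diff_rdistrib)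
  then have uv: "norm (u - v) \<le> norm (X - Y) * R"
    using norm_matrix_vector_mult_le[of "Y - X" r] mult_left_mono[OF r norm_ge_zero, of "X - Y"]
    by (simp add: norm_minus_commute)
  have diff_eq: "lhat lam1 lam2 G d X r s - lhat lam1 lam2 G d Y r s = ((norm u)\<^sup>2 - (norm v)\<^sup>2) / 2"
    unfolding lhat_def u_def v_def by (simp add: diff_divide_distrib)
  have "\<bar>lhat lam1 lam2 G d X r s - lhat lam1 lam2 G d Y r s\<bar> = \<bar>(norm u)\<^sup>2 - (norm v)\<^sup>2\<bar> / 2"
    unfolding diff_eq by simp
  also have "\<dots> \<le> norm (u - v) * (norm u + norm v) / 2"
    using abs_power2_norm_diff_le[of u v] by simp
  also have "\<dots> \<le> (norm (X - Y) * R) * ((M + B * R + S) + (M + B * R + S)) / 2"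
    using uv res_le[OF X] res_le[OF Y] order_trans[OF norm_ge_zero r] unfolding u_def v_def
    by (intro divide_right_mono mult_mono add_mono) auto
  also have "\<dots> = R * (M + B * R + S) * norm (X - Y)"
    by simp
  finally show ?thesis .
qed

lemma surrogate_abs_le:
  assumes t: "t \<ge> 1" and lam1: "0 \<le> lam1" and X: "norm X \<le> B"
    and lhat_le: "\<And>i. i \<in> {1..t} \<Longrightarrow> \<bar>lhat lam1 lam2 G (d i) X (r i) (s i)\<bar> \<le> C"
  shows "\<bar>surrogate lam1 lam2 G d r s t X\<bar> \<le> C + lam1 / 2 * B\<^sup>2"
proof -
  have "\<bar>(1 / real t) * (\<Sum>i\<in>{1..t}. lhat lam1 lam2 G (d i) X (r i) (s i))\<bar> \<le> C"
    using t lhat_le by (rule abs_mean_le)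
  moreover have "(norm X)\<^sup>2 \<le> B\<^sup>2"
    using X by (simp add: power_mono)
  then have "lam1 / (2 * real t) * (norm X)\<^sup>2 \<le> lam1 / 2 * B\<^sup>2"
    using lam1 t by (intro mult_mono frac_le) auto
  moreover have "0 \<le> lam1 / (2 * real t) * (norm X)\<^sup>2"
    using lam1 by simp
  ultimately show ?thesis
    unfolding surrogate_def by linarith
qed

lemma surrogate_lipschitz:
  assumes t: "t \<ge> 1" and lam1: "0 \<le> lam1" and X: "norm X \<le> B" and Y: "norm Y \<le> B"
    and lhat_lip: "\<And>i. i \<in> {1..t} \<Longrightarrow>
      \<bar>lhat lam1 lam2 G (d i) X (r i) (s i) - lhat lam1 lam2 G (d i) Y (r i) (s i)\<bar> \<le> K * norm (X - Y)"
  shows "\<bar>surrogate lam1 lam2 G d r s t X - surrogate lam1 lam2 G d r s t Y\<bar>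
           \<le> (K + lam1 * B) * norm (X - Y)"
proof -
  define c where "c = lam1 / (2 * real t)"
  define mean_diff where "mean_diff = (1 / real t) *
    (\<Sum>i\<in>{1..t}. lhat lam1 lam2 G (d i) X (r i) (s i) - lhat lam1 lam2 G (d i) Y (r i) (s i))"
  have "c \<le> lam1 / 2"
    unfolding c_def by (rule divide_left_mono) (use lam1 t in auto)
  moreover have "0 \<le> c"
    unfolding c_def using lam1 by simp
  moreover have "\<bar>(norm X)\<^sup>2 - (norm Y)\<^sup>2\<bar> \<le> norm (X - Y) * (B + B)"
    using abs_power2_norm_diff_le[of X Y] mult_left_mono[OF add_mono[OF X Y] norm_ge_zero[of "X - Y"]]
    by linarith
  ultimately have "c * \<bar>(norm X)\<^sup>2 - (norm Y)\<^sup>2\<bar> \<le> lam1 / 2 * (norm (X - Y) * (B + B))"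
    by (intro mult_mono) auto
  then have reg_diff: "\<bar>c * (norm X)\<^sup>2 - c * (norm Y)\<^sup>2\<bar> \<le> lam1 * B * norm (X - Y)"
    using \<open>0 \<le> c\<close> by (simp add: abs_mult ac_simps flip: right_diff_distrib)
  have "surrogate lam1 lam2 G d r s t X - surrogate lam1 lam2 G d r s t Y
      = mean_diff + (c * (norm X)\<^sup>2 - c * (norm Y)\<^sup>2)"
    unfolding surrogate_def c_def mean_diff_def by (simp add: sum_subtractf algebra_simps)
  then have "\<bar>surrogate lam1 lam2 G d r s t X - surrogate lam1 lam2 G d r s t Y\<bar>
      \<le> \<bar>mean_diff\<bar> + \<bar>c * (norm X)\<^sup>2 - c * (norm Y)\<^sup>2\<bar>"
    by (simp only: abs_triangle_ineq)
  also have "\<dots> \<le> K * norm (X - Y) + lam1 * B * norm (X - Y)"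
    unfolding mean_diff_def using abs_mean_le[OF t lhat_lip] reg_diff by (rule add_mono)
  also have "\<dots> = (K + lam1 * B) * norm (X - Y)"
    by (simp add: algebra_simps)
  finally show ?thesis .
qed

lemma abs_le_of_lipschitz_on_bounded:
  fixes f :: "'a::real_normed_vector \<Rightarrow> real"
  assumes lip: "\<And>X Y. X \<in> A \<Longrightarrow> Y \<in> A \<Longrightarrow> \<bar>f X - f Y\<bar> \<le> K * norm (X - Y)" and "0 \<le> K"
    and bounded: "\<And>X. X \<in> A \<Longrightarrow> norm X \<le> B"
    and Z: "Z \<in> A" "\<bar>f Z\<bar> \<le> C"
    and X: "X \<in> A"
  shows "\<bar>f X\<bar> \<le> C + K * (2 * B)"
proof -
  have "norm (X - Z) \<le> 2 * B"
    using bounded[OF X] bounded[OF Z(1)] norm_triangle_ineq4[of X Z] by linarith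
  then have "K * norm (X - Z) \<le> K * (2 * B)"
    using \<open>0 \<le> K\<close> by (rule mult_left_mono)
  then show ?thesis
    using lip[OF X Z(1)] Z(2) by linarith
qed

theorem proposition2:
  fixes lam1 lam2 M :: real
    and G :: "'p::finite set set"
    and d :: "nat \<Rightarrow> real ^ 'p"
    and r :: "nat \<Rightarrow> real ^ 'r::finite"
    and s :: "nat \<Rightarrow> real ^ 'p"
    and L :: "nat \<Rightarrow> real ^ 'r ^ 'p"
    and LL :: "(real ^ 'r ^ 'p) set"
  assumes lam1: "lam1 > 0" and lam2: "lam2 > 0"
    and G_fin: "finite G"
    and d_bd: "\<And>t. norm (d t) \<le> M"
    and rs_min: "\<And>t. t \<ge> 1 \<Longrightarrow> is_minimizer lam1 lam2 G (d t) (L (t - 1)) (r t) (s t)"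
    and L_upd: "\<And>t. t \<ge> 1 \<Longrightarrow>
                  L t = Bmat d r s t ** matrix_inv (Amat r t + lam1 *\<^sub>R mat 1)"
    and LL_compact: "compact LL"
    and L_in: "\<And>t. L t \<in> LL"
  shows
    "(\<exists>C. (\<forall>t\<ge>1. \<bar>lhat lam1 lam2 G (d t) (L (t - 1)) (r t) (s t)\<bar> \<le> C)
          \<and> (\<forall>t i. \<bar>ell lam1 lam2 G (d i) (L t)\<bar> \<le> C))
     \<and> (\<exists>C K. \<forall>t\<ge>1.
          (\<forall>X\<in>LL. \<bar>surrogate lam1 lam2 G d r s t X\<bar> \<le> C)
          \<and> (\<forall>X\<in>LL. \<forall>Y\<in>LL.
               \<bar>surrogate lam1 lam2 G d r s t X - surrogate lam1 lam2 G d r s t Y\<bar>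
                 \<le> K * norm (X - Y)))"
proof -
  have lam_nonneg: "0 \<le> lam1" "0 \<le> lam2"
    using lam1 lam2 by simp_all
  have "0 \<le> M"
    using order_trans[OF norm_ge_zero d_bd] .
  obtain B where "0 < B" and B: "\<And>X. X \<in> LL \<Longrightarrow> norm X \<le> B"
    using compact_imp_bounded[OF LL_compact] bounded_pos by blast
  define R where "R = M / sqrt lam1"
  define K where "K = R * (M + B * R + (2 * M + B * R))"
  have "0 \<le> K"
    unfolding K_def R_def using \<open>0 \<le> M\<close> \<open>0 < B\<close> lam1 by (simp add: zero_le_mult_iff)
  note rs_le = is_minimizer_norm_le[OF lam1 lam_nonneg(2) rs_min d_bd B[OF L_in], folded R_def]
  have lhat_lip: "\<bar>lhat lam1 lam2 G (d t) X (r t) (s t) - lhat lam1 lam2 G (d t) Y (r t) (s t)\<bar>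
      \<le> K * norm (X - Y)" if "t \<ge> 1" "X \<in> LL" "Y \<in> LL" for t X Y
    unfolding K_def using d_bd rs_le B that by (intro lhat_lipschitz_in_L) auto
  have lhat_opt: "\<bar>lhat lam1 lam2 G (d t) (L (t - 1)) (r t) (s t)\<bar> \<le> M\<^sup>2 / 2" if "t \<ge> 1" for t
    using is_minimizer_lhat_le[OF rs_min[OF that]] lhat_nonneg[OF lam_nonneg, of G "d t" "L (t - 1)"]
      power_mono[OF d_bd[of t] norm_ge_zero, of 2] by simp
  have lhat_le: "\<bar>lhat lam1 lam2 G (d t) X (r t) (s t)\<bar> \<le> M\<^sup>2 / 2 + K * (2 * B)"
    if "t \<ge> 1" "X \<in> LL" for t X
    using abs_le_of_lipschitz_on_bounded[OF lhat_lip[OF that(1)] \<open>0 \<le> K\<close> B L_in lhat_opt] that by simp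
  have "\<bar>ell lam1 lam2 G (d i) (L t)\<bar> \<le> M\<^sup>2 / 2" for i t
    using ell_nonneg[OF lam_nonneg, of G "d i" "L t"] ell_le_half_norm_sq[OF lam_nonneg, of G "d i" "L t"]
      power_mono[OF d_bd[of i] norm_ge_zero, of 2] by simp
  moreover have "\<forall>t\<ge>1. (\<forall>X\<in>LL. \<bar>surrogate lam1 lam2 G d r s t X\<bar> \<le> M\<^sup>2 / 2 + K * (2 * B) + lam1 / 2 * B\<^sup>2)
      \<and> (\<forall>X\<in>LL. \<forall>Y\<in>LL. \<bar>surrogate lam1 lam2 G d r s t X - surrogate lam1 lam2 G d r s t Y\<bar>
              \<le> (K + lam1 * B) * norm (X - Y))"
    using surrogate_abs_le[OF _ lam_nonneg(1) B lhat_le]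
      surrogate_lipschitz[OF _ lam_nonneg(1) B B lhat_lip] by auto
  ultimately show ?thesis
    using lhat_opt by blast
qed

end
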